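(* For integers $n\ge k\ge 0$ define the Salié coefficients $s(n,k)$ by $$\sum_{n,k\ge 0}\frac{x^{2n}}{(2n)!}\,s(n,k)\,y^{k}=\frac{\cosh\!\left(\tfrac12 x\sqrt{1+4y}\right)}{\cosh\!\left(\tfrac12 x\right)},$$ and set $\epsilon(n,k)=|s(n,k)|/4^{k}$. Then for all $n>1$ and $1\le k\le n-1$, $$\epsilon(n,k)>2\,\epsilon(n,k+1)\quad\text{and}\quad \epsilon(n,k)>\sum_{l=k+1}^{n}\epsilon(n,l).$$ *)

theory Defs
  imports Complex_Main "HOL-Computational_Algebra.Polynomial" "HOL-Computational_Algebra.Formal_Power_Series"
begin

text \<open>Bivariate generating functions are represented as formal power series in x
whose coefficients are real polynomials in y.\<close>

text \<open>Numerator: cosh((1/2) x sqrt(1+4y)) = sum over even m of (x/2)^m (1+4y)^(m/2) / m!.\<close>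
definition salie_num :: "real poly fps" where
  "salie_num = Abs_fps (\<lambda>m. if even m
      then smult ((1/2)^m / fact m) ([:1, 4:] ^ (m div 2)) else 0)"

text \<open>Denominator: cosh(x/2) = sum over even m of (x/2)^m / m!.\<close>
definition salie_den :: "real poly fps" where
  "salie_den = Abs_fps (\<lambda>m. if even m then [: (1/2)^m / fact m :] else 0)"

text \<open>The quotient; the denominator has constant term 1, so it is invertible.\<close>
definition salie_gf :: "real poly fps" where
  "salie_gf = salie_num * fps_right_inverse salie_den 1"

definition salie :: "nat \<Rightarrow> nat \<Rightarrow> real" where
  "salie n k = fact (2*n) * coeff (fps_nth salie_gf (2*n)) k"

definition salie_eps :: "nat \<Rightarrow> nat \<Rightarrow> real" where
  "salie_eps n k = \<bar>salie n k\<bar> / 4 ^ k"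

lemma salie_den_inverse: "salie_den * fps_right_inverse salie_den 1 = 1"
  by (rule fps_right_inverse) (simp add: salie_den_def)

end

(*
  Let G_k(x) = sum_n s(n,k) x^(2n) / (2n)! be the column of y^k in the generating function.
  Multiplying by cosh(x/2) and comparing with the numerator gives G_0 = 1,
  G_1 = x tanh(x/2) and G_k'' + tanh(x/2) G_k' = G_(k-1), because the y^k-part of the
  numerator satisfies N_k'' = N_k/4 + N_(k-1). The substitution x := ix turns this into
  H_k'' = H_(k-1) + tan(x/2) H_k' for H_k = (-1)^k G_k(ix), whose coefficient of x^(2n) is
  |s(n,k)| / (2n)!. As tan(x/2) has nonnegative Taylor coefficients, induction on the degree
  shows that H_k has nonnegative coefficients, and that so has D_k = 2 H_k - H_(k+1), which
  satisfies the same recursion; at x^(2n) with k < n its coefficient is even positive. This is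
  eps(n,k) > 2 eps(n,k+1), and the bound on the tail sum follows by comparison with a
  geometric series.
*)
theory Submission
  imports Defs
begin

unbundle fps_syntax

lemma coeff_one_linear_poly_power:
  "coeff ([:1, b:] ^ n) i = of_nat (n choose i) * (b :: 'a :: comm_semiring_1) ^ i"
proof (cases "i \<le> n")
  case True
  then show ?thesis by (simp add: coeff_linear_poly_power)
next
  case False
  have "degree ([:1, b:] ^ n) \<le> n"
    using degree_power_le[of "[:1, b:]" n] by (simp add: le_trans)
  with False have "coeff ([:1, b:] ^ n) i = 0"
    by (intro coeff_eq_0) simp
  with False show ?thesis by (simp add: binomial_eq_0)
qed

lemma fps_mult_nth_nonneg:
  fixes A B :: "'a::ordered_semiring_0 fps"
  assumes "\<And>i. i \<le> m \<Longrightarrow> 0 \<le> A $ i" "\<And>i. i \<le> m \<Longrightarrow> 0 \<le> B $ i"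
  shows "0 \<le> (A * B) $ m"
  unfolding fps_mult_nth using assms by (intro sum_nonneg mult_nonneg_nonneg) auto

lemma fps_mult_nth_ge_summand:
  fixes A B :: "'a::{ordered_semiring_0, semiring_1} fps"
  assumes "\<And>i. i \<le> m \<Longrightarrow> 0 \<le> A $ i" "\<And>i. i \<le> m \<Longrightarrow> 0 \<le> B $ i" "i \<le> m"
  shows "A $ i * B $ (m - i) \<le> (A * B) $ m"
  unfolding fps_mult_nth using assms
  by (intro member_le_sum[where f = "\<lambda>i. A $ i * B $ (m - i)"] mult_nonneg_nonneg) auto

lemma tail_sum_le_of_halving:
  fixes e :: "nat \<Rightarrow> 'a::linordered_idom"
  assumes "k \<le> n" and "\<And>l. k \<le> l \<Longrightarrow> l < n \<Longrightarrow> 2 * e (Suc l) \<le> e l"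
  shows "(\<Sum>l = Suc k..n. e l) + e n \<le> e k"
  using assms
proof (induction k rule: inc_induct)
  case (step l)
  have "(\<Sum>l' = Suc l..n. e l') = e (Suc l) + (\<Sum>l' = Suc (Suc l)..n. e l')"
    using step.hyps by (simp add: sum.atLeast_Suc_atMost)
  with step show ?case
    by fastforce
qed simp

lemma tail_sum_less_of_halving:
  fixes e :: "nat \<Rightarrow> 'a::linordered_idom"
  assumes "k < n" and "\<And>l. k \<le> l \<Longrightarrow> l < n \<Longrightarrow> 2 * e (Suc l) < e l" and "0 \<le> e n"
  shows "(\<Sum>l = Suc k..n. e l) < e k"
proof -
  have "(\<Sum>l = Suc (Suc k)..n. e l) + e n \<le> e (Suc k)"
    using assms(1,2) by (intro tail_sum_le_of_halving) (auto intro: less_imp_le)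
  moreover have "(\<Sum>l = Suc k..n. e l) = e (Suc k) + (\<Sum>l = Suc (Suc k)..n. e l)"
    using assms(1) by (simp add: sum.atLeast_Suc_atMost)
  moreover have "2 * e (Suc k) < e k"
    using assms(1,2) by simp
  ultimately show ?thesis
    using assms(3) by simp
qed


section \<open>Parity and the substitution x := ix\<close>

definition fps_even :: "'a::zero fps \<Rightarrow> bool" where
  "fps_even A \<longleftrightarrow> (\<forall>m. odd m \<longrightarrow> A $ m = 0)"

definition fps_odd :: "'a::zero fps \<Rightarrow> bool" where
  "fps_odd A \<longleftrightarrow> (\<forall>m. even m \<longrightarrow> A $ m = 0)"

lemma fps_even_iff_compose_uminus:
  "fps_even (A :: 'a::field_char_0 fps) \<longleftrightarrow> A oo - fps_X = A"
  by (auto simp: fps_even_def fps_compose_uminus' fps_eq_iff minus_one_power_iff)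

lemma fps_odd_iff_compose_uminus:
  "fps_odd (A :: 'a::field_char_0 fps) \<longleftrightarrow> A oo - fps_X = - A"
  by (auto simp: fps_odd_def fps_compose_uminus' fps_eq_iff minus_one_power_iff)

lemma fps_odd_deriv: "fps_even A \<Longrightarrow> fps_odd (fps_deriv A)"
  by (simp add: fps_even_def fps_odd_def)

lemma fps_odd_fps_X: "fps_odd fps_X"
  by (simp add: fps_odd_def fps_X_def)

lemma fps_compose_uminus_mult_inverse:
  fixes A D :: "'a::field_char_0 fps"
  assumes "D $ 0 \<noteq> 0"
  shows "(A * inverse D) oo - fps_X = (A oo - fps_X) * inverse (D oo - fps_X)"
  using assms by (simp add: fps_compose_mult_distrib fps_inverse_compose)

lemma fps_even_mult_inverse:
  fixes A D :: "'a::field_char_0 fps"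
  assumes "fps_even A" "fps_even D" "D $ 0 \<noteq> 0"
  shows "fps_even (A * inverse D)"
  using assms by (simp add: fps_even_iff_compose_uminus fps_compose_uminus_mult_inverse)

lemma fps_odd_mult_inverse:
  fixes A D :: "'a::field_char_0 fps"
  assumes "fps_odd A" "fps_even D" "D $ 0 \<noteq> 0"
  shows "fps_odd (A * inverse D)"
  using assms
  by (simp add: fps_even_iff_compose_uminus fps_odd_iff_compose_uminus fps_compose_uminus_mult_inverse)

(* On even series this is A(ix); on odd series it is A(ix) / i. *)
definition fps_twist :: "'a::comm_ring_1 fps \<Rightarrow> 'a fps" where
  "fps_twist A = Abs_fps (\<lambda>m. (- 1) ^ (m div 2) * A $ m)"

lemma fps_twist_nth [simp]: "fps_twist A $ m = (- 1) ^ (m div 2) * A $ m"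
  by (simp add: fps_twist_def)

lemma fps_twist_add [simp]: "fps_twist (A + B) = fps_twist A + fps_twist B"
  by (simp add: fps_eq_iff algebra_simps)

lemma fps_twist_const_mult [simp]: "fps_twist (fps_const c * A) = fps_const c * fps_twist A"
  by (simp add: fps_eq_iff algebra_simps)

lemma fps_twist_const [simp]: "fps_twist (fps_const c) = fps_const c"
  by (simp add: fps_eq_iff)

lemma fps_twist_one [simp]: "fps_twist 1 = 1"
  by (simp add: fps_eq_iff)

lemma fps_twist_fps_X [simp]: "fps_twist fps_X = fps_X"
  by (simp add: fps_eq_iff fps_X_def)

lemma fps_twist_mult_odd:
  assumes "fps_odd A" "fps_odd B"
  shows "fps_twist (A * B) = - (fps_twist A * fps_twist B)"
proof (rule fps_ext)
  fix m
  have "(- 1) ^ (m div 2) * (A $ i * B $ (m - i))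
      = - ((- 1) ^ (i div 2) * A $ i * ((- 1) ^ ((m - i) div 2) * B $ (m - i)))" if "i \<le> m" for i
  proof (cases "odd i \<and> odd (m - i)")
    case True
    with that have "m div 2 = Suc (i div 2 + (m - i) div 2)"
      by presburger
    then show ?thesis by (simp add: power_add algebra_simps)
  next
    case False
    then have "A $ i = 0 \<or> B $ (m - i) = 0"
      using assms unfolding fps_odd_def by blast
    then show ?thesis by auto
  qed
  then have "(\<Sum>i=0..m. (- 1) ^ (m div 2) * (A $ i * B $ (m - i)))
      = - (\<Sum>i=0..m. (- 1) ^ (i div 2) * A $ i * ((- 1) ^ ((m - i) div 2) * B $ (m - i)))"
    by (simp add: sum_negf[symmetric])
  then show "fps_twist (A * B) $ m = (- (fps_twist A * fps_twist B)) $ m"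
    by (simp only: fps_twist_nth fps_mult_nth sum_distrib_left fps_neg_nth)
qed

lemma fps_twist_deriv_even:
  assumes "fps_even A"
  shows "fps_twist (fps_deriv A) = - fps_deriv (fps_twist A)"
proof (rule fps_ext)
  fix m
  show "fps_twist (fps_deriv A) $ m = (- fps_deriv (fps_twist A)) $ m"
  proof (cases "odd m")
    case True
    then have "Suc m div 2 = Suc (m div 2)"
      by (auto elim!: oddE)
    then show ?thesis by simp
  next
    case False
    with assms show ?thesis by (simp add: fps_even_def)
  qed
qed

lemma fps_twist_deriv_odd:
  assumes "fps_odd A"
  shows "fps_twist (fps_deriv A) = fps_deriv (fps_twist A)"
proof (rule fps_ext)
  fix m
  show "fps_twist (fps_deriv A) $ m = fps_deriv (fps_twist A) $ m"
  proof (cases "even m")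
    case True
    then have "Suc m div 2 = m div 2"
      by (auto elim!: evenE)
    then show ?thesis by simp
  next
    case False
    with assms show ?thesis by (simp add: fps_odd_def)
  qed
qed


section \<open>The hyperbolic series\<close>

definition cosh_half :: "real fps" where
  "cosh_half = Abs_fps (\<lambda>m. if even m then (1/2)^m / fact m else 0)"

definition sinh_half :: "real fps" where
  "sinh_half = Abs_fps (\<lambda>m. if odd m then (1/2)^m / fact m else 0)"

lemma cosh_half_nth_Suc: "real (Suc m) * cosh_half $ Suc m = sinh_half $ m / 2"
  by (simp add: cosh_half_def sinh_half_def)

lemma sinh_half_nth_Suc: "real (Suc m) * sinh_half $ Suc m = cosh_half $ m / 2"
  by (simp add: cosh_half_def sinh_half_def)

lemma fps_deriv_cosh_half: "fps_deriv cosh_half = fps_const (1/2) * sinh_half"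
  by (rule fps_ext) (simp add: cosh_half_nth_Suc[simplified])

lemma fps_deriv_sinh_half: "fps_deriv sinh_half = fps_const (1/2) * cosh_half"
  by (rule fps_ext) (simp add: sinh_half_nth_Suc[simplified])

lemma cosh_half_nth_Suc_Suc:
  "real ((m + 1) * (m + 2)) * cosh_half $ (m + 2) = cosh_half $ m / 4"
proof -
  have "real ((m + 1) * (m + 2)) * cosh_half $ (m + 2)
      = real (Suc m) * (real (Suc (Suc m)) * cosh_half $ Suc (Suc m))"
    by (simp add: algebra_simps)
  also have "\<dots> = real (Suc m) * sinh_half $ Suc m / 2"
    by (simp only: cosh_half_nth_Suc)
  also have "\<dots> = cosh_half $ m / 4"
    by (simp only: sinh_half_nth_Suc)
  finally show ?thesis .
qed

lemma cosh_half_nth_0 [simp]: "cosh_half $ 0 = 1"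
  by (simp add: cosh_half_def)

lemma cosh_half_nonzero: "cosh_half \<noteq> 0"
  using cosh_half_nth_0 by (metis fps_zero_nth zero_neq_one)

lemma cosh_half_mult_right_cancel: "A * cosh_half = B * cosh_half \<Longrightarrow> A = B"
  using cosh_half_nonzero by simp

lemma fps_even_cosh_half: "fps_even cosh_half"
  by (simp add: fps_even_def cosh_half_def)

definition tanh_half :: "real fps" where
  "tanh_half = sinh_half * inverse cosh_half"

lemma tanh_half_mult_cosh_half: "tanh_half * cosh_half = sinh_half"
  by (simp add: tanh_half_def mult.assoc inverse_mult_eq_1)

lemma fps_odd_tanh_half: "fps_odd tanh_half"
  unfolding tanh_half_def
  by (rule fps_odd_mult_inverse) (simp_all add: fps_odd_def sinh_half_def fps_even_cosh_half)

lemma tanh_half_ode: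
  "fps_deriv tanh_half + fps_const (1/2) * (tanh_half * tanh_half) = fps_const (1/2)"
proof (rule cosh_half_mult_right_cancel)
  have "fps_deriv (tanh_half * cosh_half) = fps_deriv sinh_half"
    by (simp only: tanh_half_mult_cosh_half)
  then have "fps_deriv tanh_half * cosh_half + fps_const (1/2) * (tanh_half * sinh_half)
      = fps_const (1/2) * cosh_half"
    by (simp add: fps_deriv_cosh_half fps_deriv_sinh_half algebra_simps)
  then show "(fps_deriv tanh_half + fps_const (1/2) * (tanh_half * tanh_half)) * cosh_half
      = fps_const (1/2) * cosh_half"
    by (simp add: algebra_simps flip: tanh_half_mult_cosh_half)
qed


section \<open>The columns of the generating function\<close>

definition salie_column :: "nat \<Rightarrow> real fps" where
  "salie_column k = Abs_fps (\<lambda>m. coeff (salie_gf $ m) k)"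

(* The y^k-part of the numerator, from the binomial expansion of (1 + 4y)^(m/2). *)
definition salie_num_column :: "nat \<Rightarrow> real fps" where
  "salie_num_column k = Abs_fps (\<lambda>m. cosh_half $ m * (of_nat (m div 2 choose k) * 4 ^ k))"

lemma salie_gf_mult_den: "salie_gf * salie_den = salie_num"
  using salie_den_inverse by (simp add: salie_gf_def mult.assoc mult.commute)

lemma salie_column_mult_cosh_half: "salie_column k * cosh_half = salie_num_column k"
proof (rule fps_ext)
  fix m
  have den: "salie_den $ j = [: cosh_half $ j :]" for j
    by (simp add: salie_den_def cosh_half_def)
  have "(salie_column k * cosh_half) $ m = coeff ((salie_gf * salie_den) $ m) k"
    by (simp add: fps_mult_nth salie_column_def den coeff_sum mult.commute)
  also have "\<dots> = salie_num_column k $ m"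
    by (simp add: salie_gf_mult_den salie_num_def salie_num_column_def cosh_half_def
        coeff_one_linear_poly_power)
  finally show "(salie_column k * cosh_half) $ m = salie_num_column k $ m" .
qed

lemma salie_num_column_0: "salie_num_column 0 = cosh_half"
  by (rule fps_ext) (simp add: salie_num_column_def)

lemma salie_num_column_1: "salie_num_column 1 = fps_X * sinh_half"
proof (rule fps_ext)
  fix m
  show "salie_num_column 1 $ m = (fps_X * sinh_half) $ m"
  proof (cases m)
    case (Suc j)
    have N: "salie_num_column 1 $ m = cosh_half $ Suc j * (real (Suc j div 2) * 4)"
      by (simp add: salie_num_column_def Suc)
    show ?thesis
    proof (cases "odd j")
      case True
      then have four: "real (Suc j div 2) * 4 = 2 * real (Suc j)"
        by (auto elim!: oddE)
      have "salie_num_column 1 $ m = 2 * (real (Suc j) * cosh_half $ Suc j)"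
        unfolding N four by (simp only: ac_simps)
      also have "\<dots> = sinh_half $ j"
        by (simp only: cosh_half_nth_Suc)
      finally show ?thesis
        by (simp add: Suc)
    next
      case False
      then show ?thesis unfolding N by (simp add: Suc cosh_half_def sinh_half_def)
    qed
  qed (simp add: salie_num_column_def)
qed

lemma salie_num_column_nth_below: "m < 2 * k \<Longrightarrow> salie_num_column k $ m = 0"
  by (simp add: salie_num_column_def binomial_eq_0 less_mult_imp_div_less mult.commute)

lemma fps_deriv_fps_deriv_salie_num_column:
  assumes "k \<ge> 1"
  shows "fps_deriv (fps_deriv (salie_num_column k))
    = fps_const (1/4) * salie_num_column k + salie_num_column (k - 1)"
proof (rule fps_ext)
  fix m
  obtain j where k: "k = Suc j" using assms by (cases k) auto
  have "fps_deriv (fps_deriv (salie_num_column k)) $ m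
      = real ((m + 1) * (m + 2)) * cosh_half $ (m + 2) * (of_nat (Suc (m div 2) choose k) * 4 ^ k)"
    by (simp add: salie_num_column_def algebra_simps)
  also have "\<dots> = cosh_half $ m / 4
      * ((of_nat (m div 2 choose k) + of_nat (m div 2 choose j)) * (4 * 4 ^ j))"
    by (simp only: cosh_half_nth_Suc_Suc) (simp add: k)
  also have "\<dots> = (fps_const (1/4) * salie_num_column k + salie_num_column (k - 1)) $ m"
    by (simp add: salie_num_column_def k algebra_simps)
  finally show "fps_deriv (fps_deriv (salie_num_column k)) $ m
    = (fps_const (1/4) * salie_num_column k + salie_num_column (k - 1)) $ m" .
qed

lemma salie_column_eq: "salie_column k = salie_num_column k * inverse cosh_half"
  by (simp add: salie_column_mult_cosh_half[symmetric] mult.assoc inverse_mult_eq_1')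

lemma salie_column_0: "salie_column 0 = 1"
  by (rule cosh_half_mult_right_cancel) (simp add: salie_column_mult_cosh_half salie_num_column_0)

lemma salie_column_1: "salie_column 1 = fps_X * tanh_half"
  by (rule cosh_half_mult_right_cancel)
    (simp only: salie_column_mult_cosh_half salie_num_column_1 mult.assoc tanh_half_mult_cosh_half)

lemma salie_column_nth_below: "m < 2 * k \<Longrightarrow> salie_column k $ m = 0"
  by (simp add: salie_column_eq fps_mult_nth salie_num_column_nth_below)

lemma fps_even_salie_column: "fps_even (salie_column k)"
  unfolding salie_column_eq
  by (rule fps_even_mult_inverse) (simp_all add: fps_even_def salie_num_column_def cosh_half_def
      fps_even_cosh_half)

lemma salie_column_ode:
  assumes "k \<ge> 1"
  shows "fps_deriv (fps_deriv (salie_column k)) + tanh_half * fps_deriv (salie_column k)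
    = salie_column (k - 1)"
proof (rule cosh_half_mult_right_cancel)
  let ?G = "salie_column k"
  have two_halves: "2 * fps_const (1/2) = (1 :: real fps)"
    by (simp add: numeral_fps_const fps_const_mult[symmetric])
  have "fps_deriv (fps_deriv (?G * cosh_half))
      = fps_deriv (fps_deriv ?G) * cosh_half + fps_deriv ?G * sinh_half
        + fps_const (1/4) * (?G * cosh_half)"
    by (simp add: fps_deriv_cosh_half fps_deriv_sinh_half fps_const_mult[symmetric] algebra_simps
        two_halves)
  moreover have "fps_deriv (fps_deriv (?G * cosh_half))
      = fps_const (1/4) * (?G * cosh_half) + salie_column (k - 1) * cosh_half"
    using fps_deriv_fps_deriv_salie_num_column[OF assms] by (simp add: salie_column_mult_cosh_half)
  ultimately show "(fps_deriv (fps_deriv ?G) + tanh_half * fps_deriv ?G) * cosh_half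
      = salie_column (k - 1) * cosh_half"
    by (simp add: algebra_simps flip: tanh_half_mult_cosh_half)
qed


section \<open>Positivity after the substitution\<close>

definition tan_half :: "real fps" where
  "tan_half = fps_twist tanh_half"

lemma tan_half_ode:
  "fps_deriv tan_half = fps_const (1/2) + fps_const (1/2) * (tan_half * tan_half)"
proof -
  have "fps_twist (fps_deriv tanh_half + fps_const (1/2) * (tanh_half * tanh_half))
      = fps_const (1/2)"
    by (simp only: tanh_half_ode fps_twist_const)
  then have "fps_deriv tan_half - fps_const (1/2) * (tan_half * tan_half) = fps_const (1/2)"
    using fps_odd_tanh_half by (simp add: tan_half_def fps_twist_deriv_odd fps_twist_mult_odd)
  then show ?thesis
    by (simp add: algebra_simps)
qed

lemma tan_half_nth_Suc:
  "real (Suc m) * tan_half $ Suc m = (if m = 0 then 1/2 else 0) + (tan_half * tan_half) $ m / 2"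
  using arg_cong[OF tan_half_ode, of "\<lambda>A. A $ m"] by simp

lemma tan_half_nth_even: "even m \<Longrightarrow> tan_half $ m = 0"
  using fps_odd_tanh_half by (simp add: tan_half_def fps_odd_def)

lemma tan_half_nth_1: "tan_half $ 1 = 1/2"
  using tan_half_nth_Suc[of 0] tan_half_nth_even[of 0] by simp

lemma tan_half_nth_nonneg: "0 \<le> tan_half $ m"
proof (induction m rule: less_induct)
  case (less m)
  show ?case
  proof (cases m)
    case (Suc j)
    have "0 \<le> (tan_half * tan_half) $ j"
      by (rule fps_mult_nth_nonneg) (use less.IH Suc in auto)
    then have "0 \<le> real (Suc j) * tan_half $ Suc j"
      unfolding tan_half_nth_Suc by simp
    then show ?thesis
      by (simp add: Suc zero_le_mult_iff)
  qed (simp add: tan_half_nth_even)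
qed

lemma tan_half_nth_pos: "odd m \<Longrightarrow> 0 < tan_half $ m"
proof (induction m rule: less_induct)
  case (less m)
  then obtain j where m: "m = Suc j" and j: "even j"
    by (cases m) auto
  show ?case
  proof (cases "j = 0")
    case True
    then show ?thesis using tan_half_nth_1 by (simp add: m)
  next
    case False
    with j have "j \<ge> 2" by presburger
    have "tan_half $ 1 * tan_half $ (j - 1) \<le> (tan_half * tan_half) $ j"
      by (rule fps_mult_nth_ge_summand) (use tan_half_nth_nonneg \<open>j \<ge> 2\<close> in auto)
    moreover have "0 < tan_half $ 1"
      unfolding tan_half_nth_1 by simp
    moreover have "0 < tan_half $ (j - 1)"
      using less.IH[of "j - 1"] j \<open>j \<ge> 2\<close> by (simp add: m)
    ultimately have "0 < (tan_half * tan_half) $ j"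
      by (metis mult_pos_pos order_less_le_trans)
    then have "0 < real (Suc j) * tan_half $ Suc j"
      unfolding tan_half_nth_Suc using False by simp
    then show ?thesis
      by (simp add: m zero_less_mult_iff)
  qed
qed

lemma nth_of_tan_half_ode:
  assumes "fps_deriv (fps_deriv F) = E + tan_half * fps_deriv F"
  shows "real ((m + 1) * (m + 2)) * F $ (m + 2) = E $ m + (tan_half * fps_deriv F) $ m"
  using arg_cong[OF assms, of "\<lambda>A. A $ m"] by (simp add: algebra_simps)

lemma tan_half_mult_deriv_nth_nonneg:
  assumes "\<And>i. i \<le> m + 1 \<Longrightarrow> 0 \<le> F $ i"
  shows "0 \<le> (tan_half * fps_deriv F) $ m"
  by (rule fps_mult_nth_nonneg) (use tan_half_nth_nonneg assms in auto)

lemma nth_of_tan_half_ode_nonneg: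
  assumes "fps_deriv (fps_deriv F) = E + tan_half * fps_deriv F"
    and "0 \<le> E $ m" and "\<And>i. i \<le> m + 1 \<Longrightarrow> 0 \<le> F $ i"
  shows "0 \<le> F $ (m + 2)"
proof -
  have "0 \<le> E $ m + (tan_half * fps_deriv F) $ m"
    using assms(2) tan_half_mult_deriv_nth_nonneg[OF assms(3)] by simp
  then have "0 \<le> real ((m + 1) * (m + 2)) * F $ (m + 2)"
    by (simp only: nth_of_tan_half_ode[OF assms(1)])
  then show ?thesis
    by (simp add: zero_le_mult_iff del: of_nat_mult)
qed

definition salie_abs_column :: "nat \<Rightarrow> real fps" where
  "salie_abs_column k = fps_const ((- 1) ^ k) * fps_twist (salie_column k)"

lemma salie_abs_column_ode:
  assumes "k \<ge> 1"
  shows "fps_deriv (fps_deriv (salie_abs_column k))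
    = salie_abs_column (k - 1) + tan_half * fps_deriv (salie_abs_column k)"
proof -
  let ?G = "salie_column k"
  obtain j where k: "k = Suc j"
    using assms by (cases k) auto
  have odd_deriv: "fps_odd (fps_deriv ?G)"
    by (rule fps_odd_deriv) (rule fps_even_salie_column)
  have "fps_twist (salie_column j)
      = fps_twist (fps_deriv (fps_deriv ?G)) + fps_twist (tanh_half * fps_deriv ?G)"
    using arg_cong[OF salie_column_ode[OF assms], of fps_twist] by (simp add: k)
  also have "\<dots> = - fps_deriv (fps_deriv (fps_twist ?G)) + tan_half * fps_deriv (fps_twist ?G)"
    using odd_deriv fps_odd_tanh_half fps_even_salie_column
    by (simp add: fps_twist_deriv_odd fps_twist_deriv_even fps_twist_mult_odd tan_half_def)
  finally have lower: "salie_abs_column (k - 1) = - fps_const ((- 1) ^ k)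
      * (- fps_deriv (fps_deriv (fps_twist ?G)) + tan_half * fps_deriv (fps_twist ?G))"
    by (simp add: salie_abs_column_def k)
  show ?thesis
    unfolding lower unfolding salie_abs_column_def fps_deriv_mult_const_left by algebra
qed

lemma salie_abs_column_0: "salie_abs_column 0 = 1"
  by (simp add: salie_abs_column_def salie_column_0)

lemma salie_abs_column_1: "salie_abs_column 1 = fps_X * tan_half"
proof -
  have "fps_const ((- 1) ^ 1) = (- 1 :: real fps)"
    by (metis fps_const_neg fps_const_1_eq_1 power_one_right)
  then show ?thesis
    unfolding salie_abs_column_def salie_column_1 tan_half_def
      fps_twist_mult_odd[OF fps_odd_fps_X fps_odd_tanh_half] fps_twist_fps_X
    by simp
qed

lemma salie_abs_column_nth_below: "m < 2 * k \<Longrightarrow> salie_abs_column k $ m = 0"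
  by (simp add: salie_abs_column_def salie_column_nth_below)

lemma abs_salie_abs_column_nth: "\<bar>salie_abs_column k $ m\<bar> = \<bar>salie_column k $ m\<bar>"
  by (simp add: salie_abs_column_def abs_mult)

lemma salie_abs_column_nth_nonneg: "0 \<le> salie_abs_column k $ m"
proof (induction m arbitrary: k rule: less_induct)
  case (less m)
  show ?case
  proof (cases "k = 0")
    case True
    then show ?thesis by (simp add: salie_abs_column_0)
  next
    case False
    then have k: "k \<ge> 1" by simp
    show ?thesis
    proof (cases "m < 2")
      case True
      with k show ?thesis by (simp add: salie_abs_column_nth_below)
    next
      case False
      then obtain j where m: "m = j + 2"
        by (metis add.commute le_add_diff_inverse not_less)
      show ?thesis
        unfolding m using less.IH m
        by (intro nth_of_tan_half_ode_nonneg[OF salie_abs_column_ode[OF k]]) auto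
    qed
  qed
qed


section \<open>The halving inequality\<close>

(* Its coefficient of x^(2n) is (2 * 4^k / (2n)!) * (eps(n,k) - 2 * eps(n,k+1)). *)
definition salie_defect :: "nat \<Rightarrow> real fps" where
  "salie_defect k = fps_const 2 * salie_abs_column k - salie_abs_column (k + 1)"

lemma salie_defect_nth:
  "salie_defect k $ m = 2 * salie_abs_column k $ m - salie_abs_column (k + 1) $ m"
  by (simp add: salie_defect_def)

lemma salie_defect_ode:
  assumes "k \<ge> 1"
  shows "fps_deriv (fps_deriv (salie_defect k))
    = salie_defect (k - 1) + tan_half * fps_deriv (salie_defect k)"
proof -
  obtain j where k: "k = Suc j"
    using assms by (cases k) auto
  show ?thesis
    using salie_abs_column_ode[of k] salie_abs_column_ode[of "k + 1"]
    by (simp add: salie_defect_def k algebra_simps)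
qed

lemma salie_defect_0_nth: "m \<ge> 1 \<Longrightarrow> salie_defect 0 $ m = - tan_half $ (m - 1)"
  using salie_abs_column_1 by (simp add: salie_defect_nth salie_abs_column_0)

lemma salie_defect_1_nth_2: "salie_defect 1 $ 2 = 1"
  using tan_half_nth_1 salie_abs_column_1 salie_abs_column_nth_below[of 2 2]
  by (simp add: salie_defect_nth numeral_2_eq_2)

(* D_0 = 2 - x tan(x/2) has negative coefficients, so for k = 1 the induction below uses
   the summand i = j - 1 of the convolution instead. *)
lemma salie_defect_1_lower_bound:
  assumes "j \<ge> 1" and "\<And>i. i \<le> j + 1 \<Longrightarrow> 0 \<le> salie_defect 1 $ i"
  shows "tan_half $ (j - 1) \<le> real ((j + 1) * (j + 2)) * salie_defect 1 $ (j + 2)"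
proof -
  let ?D = "salie_defect 1"
  have "tan_half $ (j - 1) * fps_deriv ?D $ (j - (j - 1)) \<le> (tan_half * fps_deriv ?D) $ j"
    by (rule fps_mult_nth_ge_summand) (use tan_half_nth_nonneg assms(2) in auto)
  moreover have "fps_deriv ?D $ (j - (j - 1)) = 2"
    using assms(1) salie_defect_1_nth_2 by (simp add: numeral_2_eq_2)
  ultimately have le: "2 * tan_half $ (j - 1) \<le> (tan_half * fps_deriv ?D) $ j"
    by simp
  have "real ((j + 1) * (j + 2)) * ?D $ (j + 2)
      = - tan_half $ (j - 1) + (tan_half * fps_deriv ?D) $ j"
    using nth_of_tan_half_ode[OF salie_defect_ode[of 1]] assms(1) by (simp add: salie_defect_0_nth)
  then show ?thesis
    using le by simp
qed

lemma salie_defect_nth_nonneg_pos: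
  assumes "k \<ge> 1"
  shows "0 \<le> salie_defect k $ m \<and> (even m \<and> 2 * k + 2 \<le> m \<longrightarrow> 0 < salie_defect k $ m)"
  using assms
proof (induction m arbitrary: k rule: less_induct)
  case (less m)
  show ?case
  proof (cases "m < 2")
    case True
    with less.prems show ?thesis
      by (simp add: salie_defect_nth salie_abs_column_nth_below)
  next
    case False
    then obtain j where m: "m = j + 2"
      by (metis add.commute le_add_diff_inverse not_less)
    let ?c = "real ((j + 1) * (j + 2))"
    have conv: "0 \<le> (tan_half * fps_deriv (salie_defect k)) $ j"
      by (rule tan_half_mult_deriv_nth_nonneg) (use less.IH less.prems m in auto)
    have rec: "?c * salie_defect k $ m
        = salie_defect (k - 1) $ j + (tan_half * fps_deriv (salie_defect k)) $ j"
      unfolding m by (rule nth_of_tan_half_ode[OF salie_defect_ode[OF less.prems]])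
    have "0 \<le> ?c * salie_defect k $ m
        \<and> (even m \<and> 2 * k + 2 \<le> m \<longrightarrow> 0 < ?c * salie_defect k $ m)"
    proof (cases "k \<ge> 2")
      case True
      then have "0 \<le> salie_defect (k - 1) $ j
          \<and> (even j \<and> 2 * (k - 1) + 2 \<le> j \<longrightarrow> 0 < salie_defect (k - 1) $ j)"
        using less.IH[of j "k - 1"] m by simp
      with True show ?thesis
        unfolding rec using conv m by auto
    next
      case False
      with less.prems have k: "k = 1" by simp
      show ?thesis
      proof (cases "j = 0")
        case True
        then show ?thesis using salie_defect_1_nth_2 by (simp add: k m numeral_2_eq_2)
      next
        case False
        then have "tan_half $ (j - 1) \<le> ?c * salie_defect k $ m"
          unfolding k m by (intro salie_defect_1_lower_bound) (use less.IH m k in auto)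
        moreover have "even m \<Longrightarrow> 0 < tan_half $ (j - 1)"
          using False m by (intro tan_half_nth_pos) simp
        ultimately show ?thesis
          using tan_half_nth_nonneg[of "j - 1"] by auto
      qed
    qed
    then show ?thesis
      by (simp add: zero_le_mult_iff zero_less_mult_iff del: of_nat_mult)
  qed
qed

lemma abs_salie: "\<bar>salie n k\<bar> = fact (2 * n) * salie_abs_column k $ (2 * n)"
  using abs_salie_abs_column_nth[of k "2 * n"] salie_abs_column_nth_nonneg[of k "2 * n"]
  by (simp add: salie_def salie_column_def abs_mult)

lemma salie_eps_halving:
  assumes "1 \<le> k" and "k < n"
  shows "2 * salie_eps n (k + 1) < salie_eps n k"
proof -
  have "0 < salie_defect k $ (2 * n)"
    using salie_defect_nth_nonneg_pos[OF assms(1), of "2 * n"] assms(2) by simp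
  then have "0 < fact (2 * n) / (2 * 4 ^ k) * salie_defect k $ (2 * n)"
    by simp
  also have "\<dots> = salie_eps n k - 2 * salie_eps n (k + 1)"
    by (simp add: salie_eps_def abs_salie salie_defect_nth field_simps)
  finally show ?thesis
    by simp
qed

theorem mainTheorem8:
  fixes n k :: nat
  assumes "n > 1" and "1 \<le> k" and "k \<le> n - 1"
  shows "salie_eps n k > 2 * salie_eps n (k + 1)
       \<and> salie_eps n k > (\<Sum>l = k + 1..n. salie_eps n l)"
proof -
  have halving: "2 * salie_eps n (Suc l) < salie_eps n l" if "k \<le> l" "l < n" for l
    using salie_eps_halving[of l n] assms(2) that by simp
  have "(\<Sum>l = Suc k..n. salie_eps n l) < salie_eps n k"
    using assms by (intro tail_sum_less_of_halving halving) (auto simp: salie_eps_def)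
  with halving[of k] assms show ?thesis
    by simp
qed

end
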